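(* Let $U\subset\mathbb{R}^n$ be a bounded, open, connected set and let $(u_1,u_2)$ be a viscosity supersolution of the system (S) in $U$. Assume that $\min_{i=1,2}\inf_{U}u_i$ is attained at a point of $U$, i.e. there exist $i_0\in\{1,2\}$ and $x^*\in U$ with $u_{i_0}(x^* )\le u_i(x)$ for all $x\in U$, $i=1,2$. Then there is a constant $C$ such that $u_1\equiv u_2\equiv C$ in $U$.
   Context: For $\varphi\in C^2$ near $x$, set $\Delta_\infty\varphi(x)=|D\varphi(x)|^{-2}\sum_{k,l=1}^n\varphi_{x_k}\varphi_{x_l}\varphi_{x_kx_l}(x)$ when $D\varphi(x)\neq0$. Define $\Delta_\infty^+\varphi(x)=\Delta_\infty\varphi(x)$ if $D\varphi(x)\ne0$ and $\Delta_\infty^+\varphi(x)=\max\{D^2\varphi(x)v\cdot v: v\in\mathbb{S}^{n-1}\}$ if $D\varphi(x)=0$; define $\Delta_\infty^-\varphi(x)$ in the same way with $\min$ in place of $\max$. The system (S) on an open set $\Omega$ is: $-\Delta_\infty u_1+u_1-u_2=0$ and $-\Delta_\infty u_2+u_2-u_1=0$ in $\Omega$. A pair $(u_1,u_2)$ of upper semicontinuous functions on $\Omega$ is a viscosity subsolution of (S) in $\Omega$ if for each $i\in\{1,2\}$, $j=3-i$, and each $\varphi\in C^2(\Omega)$ such that $u_i-\varphi$ has a local maximum at $x_0\in\Omega$, one has $-\Delta_\infty^+\varphi(x_0)+u_i(x_0)-u_j(x_0)\le0$. A pair of lower semicontinuous functions on $\Omega$ is a viscosity supersolution if for each $i$,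 $j=3-i$, and each $\varphi\in C^2(\Omega)$ such that $u_i-\varphi$ has a local minimum at $x_0\in\Omega$, one has $-\Delta_\infty^-\varphi(x_0)+u_i(x_0)-u_j(x_0)\ge0$. A viscosity solution is a pair that is both a subsolution and a supersolution. *)

theory Defs
  imports "HOL-Analysis.Analysis"
begin

definition grad :: "(real^'n \<Rightarrow> real) \<Rightarrow> real^'n \<Rightarrow> real^'n" where
  "grad \<phi> x = (\<chi> k. frechet_derivative \<phi> (at x) (axis k 1))"

definition hess :: "(real^'n \<Rightarrow> real) \<Rightarrow> real^'n \<Rightarrow> real^'n^'n" where
  "hess \<phi> x = (\<chi> k l. frechet_derivative (\<lambda>y. grad \<phi> y $ k) (at x) (axis l 1))"

definition C2_on :: "(real^'n) set \<Rightarrow> (real^'n \<Rightarrow> real) \<Rightarrow> bool" where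
  "C2_on \<Omega> \<phi> \<longleftrightarrow>
     (\<forall>x\<in>\<Omega>. \<phi> differentiable (at x)) \<and>
     (\<forall>x\<in>\<Omega>. \<forall>k. (\<lambda>y. grad \<phi> y $ k) differentiable (at x)) \<and>
     continuous_on \<Omega> (hess \<phi>)"

definition inf_laplace_minus :: "(real^'n \<Rightarrow> real) \<Rightarrow> real^'n \<Rightarrow> real" where
  "inf_laplace_minus \<phi> x =
     (if grad \<phi> x \<noteq> 0
      then (\<Sum>k\<in>UNIV. \<Sum>l\<in>UNIV. grad \<phi> x $ k * grad \<phi> x $ l * hess \<phi> x $ k $ l)
           / (norm (grad \<phi> x))\<^sup>2
      else Inf {(hess \<phi> x *v v) \<bullet> v | v. norm v = 1})"

definition lsc_on :: "(real^'n) set \<Rightarrow> (real^'n \<Rightarrow> real) \<Rightarrow> bool" where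
  "lsc_on \<Omega> u \<longleftrightarrow>
     (\<forall>x\<in>\<Omega>. \<forall>e>0. \<exists>d>0. \<forall>y\<in>\<Omega>. dist y x < d \<longrightarrow> u x - e < u y)"

definition local_min_on :: "(real^'n) set \<Rightarrow> (real^'n \<Rightarrow> real) \<Rightarrow> real^'n \<Rightarrow> bool" where
  "local_min_on \<Omega> f x0 \<longleftrightarrow> x0 \<in> \<Omega> \<and>
     (\<exists>r>0. \<forall>y\<in>\<Omega>. dist y x0 < r \<longrightarrow> f x0 \<le> f y)"

text \<open>Supersolution condition for the i-th equation, with u = u_i and w = u_j.\<close>
definition super_cond :: "(real^'n) set \<Rightarrow> (real^'n \<Rightarrow> real) \<Rightarrow> (real^'n \<Rightarrow> real) \<Rightarrow> bool" where
  "super_cond \<Omega> u w \<longleftrightarrow>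
     (\<forall>\<phi> x0. C2_on \<Omega> \<phi> \<longrightarrow> local_min_on \<Omega> (\<lambda>y. u y - \<phi> y) x0 \<longrightarrow>
        - inf_laplace_minus \<phi> x0 + u x0 - w x0 \<ge> 0)"

definition visc_supersol :: "(real^'n) set \<Rightarrow> (real^'n \<Rightarrow> real) \<Rightarrow> (real^'n \<Rightarrow> real) \<Rightarrow> bool" where
  "visc_supersol \<Omega> u1 u2 \<longleftrightarrow>
     lsc_on \<Omega> u1 \<and> lsc_on \<Omega> u2 \<and> super_cond \<Omega> u1 u2 \<and> super_cond \<Omega> u2 u1"

end

theory Submission
  imports Defs
begin

text \<open>
  Let m be the common lower bound of u1 and u2 on U, attained at an interior point.
  (1) Testing with a constant function shows that at a point where one component
      equals m the other component is at most m, hence also equals m.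
  (2) The set M = {u1 = m} is open. Otherwise there is a point y outside M arbitrarily
      close to a point z of M; lower semicontinuity makes u1 > m + delta on a small sphere
      around y. The Gaussian barrier psi(x) = m + e (exp(-a|x-y|^2) - c), with a large and
      c chosen so that psi = m on the sphere through z, is a strict classical subsolution
      off the small ball. Minimising u1 - psi over the annulus between the two spheres
      produces an interior touching point where the supersolution inequality contradicts
      the strict subsolution property of psi.
  (3) U - M = {u1 > m} is open by lower semicontinuity, so connectedness gives M = U.
\<close>

lemma lsc_on_subset:
  assumes "lsc_on U u" and "K \<subseteq> U"
  shows "lsc_on K u"
  using assms unfolding lsc_on_def by (meson subsetD)

lemma lsc_on_diff_continuous:
  assumes "lsc_on K u" and "continuous_on K \<psi>"
  shows "lsc_on K (\<lambda>x. u x - \<psi> x)"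
  unfolding lsc_on_def
proof (intro ballI allI impI)
  fix x and e :: real assume x: "x \<in> K" and e: "e > 0"
  obtain d1 where d1: "d1 > 0" "\<forall>y\<in>K. dist y x < d1 \<longrightarrow> u x - e/2 < u y"
    using assms(1) x e unfolding lsc_on_def by (meson half_gt_zero)
  obtain d2 where d2: "d2 > 0" "\<forall>y\<in>K. dist y x < d2 \<longrightarrow> dist (\<psi> y) (\<psi> x) < e/2"
    using assms(2) x e unfolding continuous_on_iff by (meson half_gt_zero)
  have "u x - \<psi> x - e < u y - \<psi> y" if "y \<in> K" "dist y x < min d1 d2" for y
  proof -
    have "u x - e/2 < u y" and "\<bar>\<psi> y - \<psi> x\<bar> < e/2"
      using d1 d2 that by (auto simp: dist_real_def)
    then show ?thesis by linarith
  qed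
  then show "\<exists>d>0. \<forall>y\<in>K. dist y x < d \<longrightarrow> u x - \<psi> x - e < u y - \<psi> y"
    using d1 d2 by (intro exI[of _ "min d1 d2"]) auto
qed

lemma lsc_strict_superlevel_open:
  assumes "open U" and "lsc_on U u"
  shows "open {x\<in>U. t < u x}"
  unfolding open_contains_ball
proof
  fix x assume "x \<in> {x\<in>U. t < u x}"
  then have x: "x \<in> U" "t < u x" by auto
  obtain d1 where d1: "d1 > 0" "ball x d1 \<subseteq> U" using assms(1) x open_contains_ball by blast
  obtain d2 where d2: "d2 > 0" "\<forall>y\<in>U. dist y x < d2 \<longrightarrow> u x - (u x - t) < u y"
    using assms(2) x unfolding lsc_on_def by (meson diff_gt_0_iff_gt)
  have "ball x (min d1 d2) \<subseteq> {x\<in>U. t < u x}"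
  proof
    fix y assume "y \<in> ball x (min d1 d2)"
    then have "y \<in> U" "dist y x < d2" using d1(2) by (auto simp: dist_commute)
    then show "y \<in> {x\<in>U. t < u x}" using d2(2) by auto
  qed
  then show "\<exists>e>0. ball x e \<subseteq> {x\<in>U. t < u x}"
    using d1 d2 by (intro exI[of _ "min d1 d2"]) auto
qed

lemma lsc_sublevel_closed:
  assumes "closed K" and "lsc_on K f"
  shows "closed {y\<in>K. f y \<le> t}"
  unfolding closed_limpt
proof (intro allI impI)
  fix x assume lim: "x islimpt {y\<in>K. f y \<le> t}"
  then have xK: "x \<in> K"
    using assms(1) closed_limpt islimpt_subset by (metis (no_types, lifting) mem_Collect_eq subsetI)
  show "x \<in> {y\<in>K. f y \<le> t}"
  proof (rule ccontr)
    assume "x \<notin> {y\<in>K. f y \<le> t}"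
    then have "t < f x" using xK by auto
    then obtain d where d: "d > 0" "\<forall>y\<in>K. dist y x < d \<longrightarrow> f x - (f x - t) < f y"
      using assms(2) xK unfolding lsc_on_def by (meson diff_gt_0_iff_gt)
    obtain y where "y \<in> {y\<in>K. f y \<le> t}" "dist y x < d"
      using lim d(1) unfolding islimpt_approachable by blast
    then show False using d(2) by auto
  qed
qed

text \<open>A lower semicontinuous function on a nonempty compact set attains its minimum:
  otherwise the complements of the sublevel sets through the points of the set form an open
  cover, and a point of least value among the centres of a finite subcover is not covered.\<close>
lemma lsc_attains_min:
  assumes "compact K" and "K \<noteq> {}" and "lsc_on K f"
  shows "\<exists>p\<in>K. \<forall>x\<in>K. f p \<le> f x"
proof (rule ccontr)
  assume no_min: "\<not> ?thesis"
  define V where "V x = - {y\<in>K. f y \<le> f x}" for x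
  have "open (V x)" for x
    unfolding V_def using lsc_sublevel_closed[OF compact_imp_closed[OF assms(1)] assms(3)] by blast
  moreover have "K \<subseteq> (\<Union>x\<in>K. V x)"
    using no_min unfolding V_def by (auto simp: not_le)
  ultimately obtain F where F: "F \<subseteq> K" "finite F" "K \<subseteq> (\<Union>x\<in>F. V x)"
    using compactE_image[OF assms(1)] by metis
  then have "F \<noteq> {}" using assms(2) by auto
  then obtain q where q: "q \<in> F" "\<forall>x\<in>F. f q \<le> f x"
    using arg_min_if_finite[OF F(2)] by (metis not_le)
  then obtain x where "x \<in> F" "q \<in> V x" using F by blast
  then show False using q F(1) unfolding V_def by auto
qed

definition gauss_barrier :: "real^'n \<Rightarrow> real \<Rightarrow> real \<Rightarrow> real \<Rightarrow> real \<Rightarrow> real^'n \<Rightarrow> real" where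
  "gauss_barrier y m e a c x = m + e * (exp (- a * ((x - y) \<bullet> (x - y))) - c)"

lemma gauss_barrier_dist: "gauss_barrier y m e a c x = m + e * (exp (- a * (dist x y)\<^sup>2) - c)"
  unfolding gauss_barrier_def by (simp add: dist_norm power2_norm_eq_inner)

lemma gauss_barrier_has_derivative:
  "(gauss_barrier y m e a c has_derivative
     (\<lambda>h. (-2 * a * e * exp (- a * ((x - y) \<bullet> (x - y)))) * ((x - y) \<bullet> h))) (at x)"
  unfolding gauss_barrier_def
  by (rule derivative_eq_intros refl)+ (simp add: algebra_simps inner_commute)

lemma grad_gauss_barrier:
  "grad (gauss_barrier y m e a c) x = (-2 * a * e * exp (- a * ((x - y) \<bullet> (x - y)))) *\<^sub>R (x - y)"
proof -
  have "grad (gauss_barrier y m e a c) x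
      = (\<chi> k. (-2 * a * e * exp (- a * ((x - y) \<bullet> (x - y)))) * ((x - y) \<bullet> axis k 1))"
    unfolding grad_def using frechet_derivative_at[OF gauss_barrier_has_derivative] by metis
  then show ?thesis by (simp add: vec_eq_iff inner_axis)
qed

lemma grad_gauss_barrier_has_derivative:
  "((\<lambda>z. grad (gauss_barrier y m e a c) z $ k) has_derivative
     (\<lambda>h. -2 * a * e * exp (- a * ((x - y) \<bullet> (x - y))) *
        (h \<bullet> axis k 1 - 2 * a * ((x - y) \<bullet> h) * ((x - y) \<bullet> axis k 1)))) (at x)"
proof -
  have component: "(\<lambda>z. grad (gauss_barrier y m e a c) z $ k)
      = (\<lambda>z. -2 * a * e * exp (- a * ((z - y) \<bullet> (z - y))) * ((z - y) \<bullet> axis k 1))"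
    by (simp add: fun_eq_iff grad_gauss_barrier inner_axis)
  show ?thesis unfolding component
    by (rule derivative_eq_intros refl)+ (simp add: algebra_simps inner_commute)
qed

lemma hess_gauss_barrier:
  "hess (gauss_barrier y m e a c) x = (\<chi> k l. -2 * a * e * exp (- a * ((x - y) \<bullet> (x - y))) *
        ((if l = k then 1 else 0) - 2 * a * (x - y) $ l * (x - y) $ k))"
proof -
  have "hess (gauss_barrier y m e a c) x $ k $ l = -2 * a * e * exp (- a * ((x - y) \<bullet> (x - y))) *
        ((if l = k then 1 else 0) - 2 * a * (x - y) $ l * (x - y) $ k)" for k l
  proof -
    have "hess (gauss_barrier y m e a c) x $ k $ l
        = frechet_derivative (\<lambda>z. grad (gauss_barrier y m e a c) z $ k) (at x) (axis l 1)"
      unfolding hess_def by simp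
    also have "\<dots> = -2 * a * e * exp (- a * ((x - y) \<bullet> (x - y))) *
        (axis l 1 \<bullet> axis k (1::real) - 2 * a * ((x - y) \<bullet> axis l 1) * ((x - y) \<bullet> axis k 1))"
      using fun_cong[OF frechet_derivative_at[OF grad_gauss_barrier_has_derivative], where x="axis l 1"]
      by metis
    also have "\<dots> = -2 * a * e * exp (- a * ((x - y) \<bullet> (x - y))) *
        ((if l = k then 1 else 0) - 2 * a * (x - y) $ l * (x - y) $ k)"
    proof -
      have "axis l 1 \<bullet> axis k (1::real) = (if l = k then 1 else 0)"
        by (simp add: inner_axis_axis)
      moreover have "(x - y) \<bullet> axis i 1 = (x - y) $ i" for i
        by (simp add: inner_axis)
      ultimately show ?thesis by (simp only:)
    qed
    finally show ?thesis .
  qed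
  then show ?thesis by (simp add: vec_eq_iff)
qed

lemma C2_gauss_barrier: "C2_on S (gauss_barrier y m e a c)"
  unfolding C2_on_def
proof (intro conjI ballI allI)
  fix x
  show "gauss_barrier y m e a c differentiable (at x)"
    using gauss_barrier_has_derivative unfolding differentiable_def by blast
  show "(\<lambda>z. grad (gauss_barrier y m e a c) z $ k) differentiable (at x)" for k
    using grad_gauss_barrier_has_derivative unfolding differentiable_def by blast
next
  have "hess (gauss_barrier y m e a c) = (\<lambda>x. \<chi> k l. -2 * a * e * exp (- a * ((x - y) \<bullet> (x - y))) *
        ((if l = k then 1 else 0) - 2 * a * (x - y) $ l * (x - y) $ k))"
    using hess_gauss_barrier by blast
  then show "continuous_on S (hess (gauss_barrier y m e a c))"
    by (simp add: continuous_intros)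
qed

lemma quadratic_form_rank_one:
  fixes g :: "real^'n"
  shows "(\<Sum>k\<in>UNIV. \<Sum>l\<in>UNIV. g $ k * g $ l * ((if l = k then 1 else 0) - b * g $ l * g $ k))
       = g \<bullet> g - b * (g \<bullet> g)\<^sup>2"
proof -
  have "(\<Sum>k\<in>UNIV. \<Sum>l\<in>UNIV. g $ k * g $ l * ((if l = k then 1 else 0) - b * g $ l * g $ k))
      = (\<Sum>k\<in>UNIV. g $ k * g $ k - b * (g $ k * g $ k) * (\<Sum>l\<in>UNIV. g $ l * g $ l))"
  proof (rule sum.cong[OF refl])
    fix k
    have "(\<Sum>l\<in>UNIV. g $ k * g $ l * ((if l = k then 1 else 0) - b * g $ l * g $ k))
        = (\<Sum>l\<in>UNIV. (if l = k then g $ k * g $ k else 0) - b * (g $ k * g $ k) * (g $ l * g $ l))"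
      by (rule sum.cong) (auto simp: algebra_simps)
    then show "(\<Sum>l\<in>UNIV. g $ k * g $ l * ((if l = k then 1 else 0) - b * g $ l * g $ k))
        = g $ k * g $ k - b * (g $ k * g $ k) * (\<Sum>l\<in>UNIV. g $ l * g $ l)"
      by (simp add: sum_subtractf sum_distrib_left)
  qed
  also have "\<dots> = (\<Sum>k\<in>UNIV. g $ k * g $ k) - b * ((\<Sum>k\<in>UNIV. g $ k * g $ k) * (\<Sum>l\<in>UNIV. g $ l * g $ l))"
    by (simp add: sum_subtractf sum_distrib_left sum_distrib_right algebra_simps)
  finally show ?thesis by (simp add: inner_vec_def power2_eq_square)
qed

lemma inf_laplace_gauss_barrier:
  assumes "a \<noteq> 0" and "e \<noteq> 0" and "x \<noteq> y"
  shows "inf_laplace_minus (gauss_barrier y m e a c) x =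
     e * exp (- a * ((x - y) \<bullet> (x - y))) * (4 * a\<^sup>2 * ((x - y) \<bullet> (x - y)) - 2 * a)"
proof -
  define g where "g = x - y"
  define q where "q = g \<bullet> g"
  define A where "A = -2 * a * e * exp (- a * q)"
  have A: "A \<noteq> 0" using assms unfolding A_def by auto
  have q: "q > 0" using assms unfolding q_def g_def by simp
  have grad: "grad (gauss_barrier y m e a c) x = A *\<^sub>R g"
    unfolding grad_gauss_barrier A_def q_def g_def ..
  have hess: "hess (gauss_barrier y m e a c) x $ k $ l = A * ((if l = k then 1 else 0) - 2 * a * g $ l * g $ k)"
    for k l unfolding hess_gauss_barrier A_def q_def g_def by simp
  have "(\<Sum>k\<in>UNIV. \<Sum>l\<in>UNIV. grad (gauss_barrier y m e a c) x $ k * grad (gauss_barrier y m e a c) x $ l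
          * hess (gauss_barrier y m e a c) x $ k $ l)
      = A ^ 3 * (\<Sum>k\<in>UNIV. \<Sum>l\<in>UNIV. g $ k * g $ l * ((if l = k then 1 else 0) - 2 * a * g $ l * g $ k))"
    unfolding grad hess by (simp add: sum_distrib_left power3_eq_cube mult_ac)
  also have "\<dots> = A ^ 3 * (q - 2 * a * q\<^sup>2)"
    unfolding quadratic_form_rank_one q_def ..
  finally have numerator: "(\<Sum>k\<in>UNIV. \<Sum>l\<in>UNIV. grad (gauss_barrier y m e a c) x $ k
      * grad (gauss_barrier y m e a c) x $ l * hess (gauss_barrier y m e a c) x $ k $ l)
      = A ^ 3 * (q - 2 * a * q\<^sup>2)" .
  have denominator: "(norm (grad (gauss_barrier y m e a c) x))\<^sup>2 = A\<^sup>2 * q"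
    unfolding grad q_def by (simp add: power_mult_distrib power2_norm_eq_inner[symmetric])
  have "grad (gauss_barrier y m e a c) x \<noteq> 0"
    using A q unfolding grad q_def by auto
  then have "inf_laplace_minus (gauss_barrier y m e a c) x = A ^ 3 * (q - 2 * a * q\<^sup>2) / (A\<^sup>2 * q)"
    unfolding inf_laplace_minus_def numerator denominator by simp
  also have "\<dots> = A * (1 - 2 * a * q)"
    using A q by (simp add: field_simps power2_eq_square power3_eq_cube)
  finally show ?thesis
    unfolding A_def q_def g_def by (simp add: algebra_simps power2_eq_square)
qed

text \<open>Constant functions are Gaussian barriers of zero amplitude; hence they are
  admissible test functions with vanishing infinity-Laplacian.\<close>
lemma constant_is_gauss_barrier: "(\<lambda>_. m) = gauss_barrier 0 m 0 0 0"
  by (simp add: fun_eq_iff gauss_barrier_def)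

lemma C2_constant: "C2_on S (\<lambda>_. m)"
  unfolding constant_is_gauss_barrier by (rule C2_gauss_barrier)

lemma inf_laplace_constant: "inf_laplace_minus (\<lambda>_. m) x = 0"
proof -
  have grad: "grad (\<lambda>_. m) x = 0" and hess: "hess (\<lambda>_. m) x = 0"
    unfolding constant_is_gauss_barrier grad_gauss_barrier hess_gauss_barrier
    by (simp_all add: vec_eq_iff)
  have "{(hess (\<lambda>_. m) x *v v) \<bullet> v | v. norm v = 1} = {0}"
    unfolding hess by (auto intro!: exI[where x="axis undefined (1::real)"])
  then show ?thesis unfolding inf_laplace_minus_def using grad by simp
qed

lemma gauss_barrier_below_top:
  assumes "0 \<le> a" and "0 < e" and "0 < c"
  shows "gauss_barrier y m e a c x < m + e"
proof -
  have "exp (- a * (dist x y)\<^sup>2) \<le> 1" using assms(1) by simp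
  then have "exp (- a * (dist x y)\<^sup>2) - c < 1" using assms(3) by linarith
  then have "e * (exp (- a * (dist x y)\<^sup>2) - c) < e * 1"
    using assms(2) by (rule mult_strict_left_mono)
  then show ?thesis unfolding gauss_barrier_dist by simp
qed

lemma gauss_barrier_below_level:
  assumes "0 < a" and "0 < e" and "0 \<le> r"
  shows "gauss_barrier y m e a (exp (- a * r\<^sup>2)) x < m \<longleftrightarrow> r < dist x y"
proof -
  have "gauss_barrier y m e a (exp (- a * r\<^sup>2)) x < m \<longleftrightarrow>
      e * (exp (- a * (dist x y)\<^sup>2) - exp (- a * r\<^sup>2)) < 0"
    unfolding gauss_barrier_dist by linarith
  also have "\<dots> \<longleftrightarrow> a * r\<^sup>2 < a * (dist x y)\<^sup>2"
    using assms(2) by (simp add: mult_less_0_iff)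
  also have "\<dots> \<longleftrightarrow> r\<^sup>2 < (dist x y)\<^sup>2"
    using assms(1) by (rule mult_less_cancel_left_pos)
  also have "\<dots> \<longleftrightarrow> r < dist x y"
    using power_mono_iff[of "dist x y" r 2] assms(3) by (simp add: not_le[symmetric])
  finally show ?thesis .
qed

lemma gauss_barrier_strict_subsolution:
  assumes "0 < r" and "1 \<le> a" and "1 \<le> a * r\<^sup>2" and "0 < e" and "0 < c"
    and "r \<le> dist x y"
  shows "gauss_barrier y m e a c x - m < inf_laplace_minus (gauss_barrier y m e a c) x"
proof -
  define q where "q = (x - y) \<bullet> (x - y)"
  define E where "E = exp (- a * q)"
  have "x \<noteq> y" using assms(1,6) by auto
  then have laplacian: "inf_laplace_minus (gauss_barrier y m e a c) x = e * E * (4 * a\<^sup>2 * q - 2 * a)"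
    unfolding E_def q_def using assms(2,4) by (simp add: inf_laplace_gauss_barrier)
  have "r\<^sup>2 \<le> q"
    unfolding q_def power2_norm_eq_inner[symmetric] using assms(1,6) by (simp add: dist_norm power_mono)
  then have "1 \<le> a * q" using assms(2,3) mult_left_mono[of "r\<^sup>2" q a] by linarith
  then have "0 \<le> 4 * a * (a * q - 1)" using assms(2) by simp
  moreover have "4 * a\<^sup>2 * q - 2 * a = 2 * a + 4 * a * (a * q - 1)"
    by (simp add: algebra_simps power2_eq_square)
  ultimately have "1 < 4 * a\<^sup>2 * q - 2 * a" using assms(2) by linarith
  moreover have "0 < e * E" unfolding E_def using assms(4) by simp
  ultimately have "e * E * 1 < e * E * (4 * a\<^sup>2 * q - 2 * a)" by (rule mult_strict_left_mono)
  moreover have "gauss_barrier y m e a c x - m < e * E"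
    unfolding gauss_barrier_def E_def q_def using assms(4,5) by simp
  ultimately show ?thesis unfolding laplacian by simp
qed

text \<open>Testing with a constant: where a supersolution component attains the common minimum m,
  the coupled component is at most m.\<close>
lemma supersol_min_coupling:
  assumes "super_cond U u w" and "x \<in> U" and "\<forall>y\<in>U. m \<le> u y" and "u x = m"
  shows "w x \<le> m"
proof -
  have "local_min_on U (\<lambda>y. u y - m) x"
    unfolding local_min_on_def using assms(2-4) by (auto intro: exI[of _ 1])
  then have "- inf_laplace_minus (\<lambda>_. m) x + u x - w x \<ge> 0"
    using assms(1)[unfolded super_cond_def, rule_format, OF C2_constant] by blast
  then show ?thesis using assms(4) by (simp add: inf_laplace_constant)
qed

text \<open>The point is a minimiser of u - psi over the compact annulus.\<close>
lemma touching_point_in_annulus: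
  fixes u \<psi> :: "real^'n \<Rightarrow> real"
  assumes lsc: "lsc_on U u" and cont: "continuous_on UNIV \<psi>"
    and radii: "0 < r1" "r1 < r2" and ball: "cball y r2 \<subseteq> U"
    and inner: "\<forall>x\<in>sphere y r1. \<psi> x < u x"
    and outer: "\<forall>x\<in>U. r2 < dist y x \<longrightarrow> \<psi> x < u x"
    and touch: "r1 \<le> dist y z" "dist y z \<le> r2" "u z \<le> \<psi> z"
  shows "\<exists>p\<in>U. r1 < dist y p \<and> u p \<le> \<psi> p \<and> local_min_on U (\<lambda>x. u x - \<psi> x) p"
proof -
  define A where "A = cball y r2 - ball y r1"
  have A_iff: "x \<in> A \<longleftrightarrow> r1 \<le> dist y x \<and> dist y x \<le> r2" for x
    unfolding A_def by auto
  have A_compact: "compact A" unfolding A_def by (intro compact_diff compact_cball open_ball)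
  have AU: "A \<subseteq> U" using ball unfolding A_def by blast
  have zA: "z \<in> A" using touch A_iff by blast
  then have A_nonempty: "A \<noteq> {}" by blast
  have A_lsc: "lsc_on A (\<lambda>x. u x - \<psi> x)"
    using lsc_on_diff_continuous[OF lsc_on_subset[OF lsc AU] continuous_on_subset[OF cont]] by simp
  from lsc_attains_min[OF A_compact A_nonempty A_lsc]
  obtain p where pA: "p \<in> A" and p_min: "\<forall>x\<in>A. u p - \<psi> p \<le> u x - \<psi> x"
    by auto
  have p_below: "u p \<le> \<psi> p" using p_min zA touch(3) by fastforce
  have p_off_inner: "r1 < dist y p"
  proof (rule ccontr)
    assume "\<not> r1 < dist y p"
    then have "p \<in> sphere y r1" using pA A_iff by simp
    then show False using inner p_below by fastforce
  qed
  have "local_min_on U (\<lambda>x. u x - \<psi> x) p"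
    unfolding local_min_on_def
  proof (intro conjI exI[of _ "dist y p - r1"] ballI impI)
    show "p \<in> U" using pA AU by blast
    show "0 < dist y p - r1" using p_off_inner by simp
    fix x assume xU: "x \<in> U" and near: "dist x p < dist y p - r1"
    have far: "r1 < dist y x" using near dist_triangle[of y p x] by (simp add: dist_commute)
    show "u p - \<psi> p \<le> u x - \<psi> x"
    proof (cases "dist y x \<le> r2")
      case True
      then have "x \<in> A" using far A_iff by simp
      then show ?thesis using p_min by blast
    next
      case False
      then show ?thesis using outer xU p_below by fastforce
    qed
  qed
  then show ?thesis using pA AU p_off_inner p_below by blast
qed

text \<open>If a supersolution component exceeds m + delta on a sphere, it
  stays strictly above m on the annulus around that sphere: otherwise the Gaussian barrier
  touches it from below at a point where the supersolution inequality contradicts the strict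
  subsolution property of the barrier.\<close>
lemma supersol_above_min_in_annulus:
  assumes lsc: "lsc_on U u" and super: "super_cond U u w"
    and above: "\<forall>x\<in>U. m \<le> u x \<and> m \<le> w x"
    and radii: "0 < r1" "r1 < r2" and ball: "cball y r2 \<subseteq> U"
    and gap: "0 < \<delta>" "\<forall>x\<in>sphere y r1. m + \<delta> \<le> u x"
    and z: "r1 \<le> dist y z" "dist y z \<le> r2"
  shows "m < u z"
proof (rule ccontr)
  assume "\<not> m < u z"
  then have uz: "u z \<le> m" by simp
  define a where "a = 1 + 1 / r1\<^sup>2"
  define e where "e = \<delta> / 2"
  define \<psi> where "\<psi> = gauss_barrier y m e a (exp (- a * r2\<^sup>2))"
  have a: "1 \<le> a" "1 \<le> a * r1\<^sup>2" unfolding a_def using radii(1) by (simp_all add: field_simps)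
  have e: "0 < e" unfolding e_def using gap(1) by simp
  have level: "\<psi> x < m \<longleftrightarrow> r2 < dist x y" for x
    unfolding \<psi>_def using a e radii by (intro gauss_barrier_below_level) auto
  have top: "\<psi> x < m + e" for x
    unfolding \<psi>_def using a e by (intro gauss_barrier_below_top) auto
  have cont: "continuous_on UNIV \<psi>"
    unfolding \<psi>_def gauss_barrier_def by (intro continuous_intros)
  have inner: "\<forall>x\<in>sphere y r1. \<psi> x < u x"
  proof
    fix x assume "x \<in> sphere y r1"
    then have "m + \<delta> \<le> u x" using gap(2) by blast
    moreover have "\<psi> x < m + e" and "e < \<delta>" using top gap(1) unfolding e_def by auto
    ultimately show "\<psi> x < u x" by linarith
  qed
  have outer: "\<forall>x\<in>U. r2 < dist y x \<longrightarrow> \<psi> x < u x"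
  proof (intro ballI impI)
    fix x assume "x \<in> U" and "r2 < dist y x"
    then have "\<psi> x < m" and "m \<le> u x" using level above by (auto simp: dist_commute)
    then show "\<psi> x < u x" by linarith
  qed
  have touch: "u z \<le> \<psi> z"
    using level[of z] z(2) uz by (simp add: dist_commute)
  obtain p where pU: "p \<in> U" and p_far: "r1 < dist y p" and p_below: "u p \<le> \<psi> p"
      and p_min: "local_min_on U (\<lambda>x. u x - \<psi> x) p"
    using touching_point_in_annulus[OF lsc cont radii ball inner outer z touch] by blast
  have "C2_on U \<psi>" unfolding \<psi>_def by (rule C2_gauss_barrier)
  then have "- inf_laplace_minus \<psi> p + u p - w p \<ge> 0"
    using super[unfolded super_cond_def, rule_format] p_min by blast
  moreover have "m \<le> w p" using above pU by blast
  ultimately have "inf_laplace_minus \<psi> p \<le> \<psi> p - m" using p_below by linarith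
  moreover have "\<psi> p - m < inf_laplace_minus \<psi> p"
    unfolding \<psi>_def using a e radii p_far
    by (intro gauss_barrier_strict_subsolution[of r1]) (auto simp: dist_commute)
  ultimately show False by simp
qed

text \<open>A point y
  near z with u y > m is the centre of a small sphere on which u > m + delta, and the sphere
  through z bounds an annulus inside U; the Hopf-type lemma then forces u z > m.\<close>
lemma supersol_min_set_open:
  assumes U: "open U" and lsc: "lsc_on U u" and super: "super_cond U u w"
    and above: "\<forall>x\<in>U. m \<le> u x \<and> m \<le> w x"
  shows "open {x\<in>U. u x = m}"
  unfolding open_contains_ball
proof
  fix z assume "z \<in> {x\<in>U. u x = m}"
  then have zU: "z \<in> U" and uz: "u z = m" by auto
  obtain \<rho> where \<rho>: "0 < \<rho>" "ball z \<rho> \<subseteq> U" using U zU open_contains_ball by blast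
  have "ball z (\<rho> / 2) \<subseteq> {x\<in>U. u x = m}"
  proof
    fix y assume y: "y \<in> ball z (\<rho> / 2)"
    then have yU: "y \<in> U" using \<rho> by auto
    show "y \<in> {x\<in>U. u x = m}"
    proof (rule ccontr)
      assume "y \<notin> {x\<in>U. u x = m}"
      then have "m < u y" using yU above by force
      define \<delta> where "\<delta> = (u y - m) / 2"
      have \<delta>: "0 < \<delta>" unfolding \<delta>_def using \<open>m < u y\<close> by simp
      obtain d where d: "0 < d" "\<forall>x\<in>U. dist x y < d \<longrightarrow> u y - \<delta> < u x"
        using lsc yU \<delta> unfolding lsc_on_def by blast
      define r2 where "r2 = dist y z"
      define r1 where "r1 = min (d / 2) (r2 / 2)"
      have "y \<noteq> z" using \<open>m < u y\<close> uz by auto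
      then have "0 < r2" unfolding r2_def by simp
      then have radii: "0 < r1" "r1 < r2" unfolding r1_def using d(1) by auto
      have ball: "cball y r2 \<subseteq> U"
      proof
        fix x assume "x \<in> cball y r2"
        then have "dist z x < \<rho>"
          using y dist_triangle[of z x y] unfolding r2_def by (simp add: dist_commute)
        then show "x \<in> U" using \<rho>(2) by auto
      qed
      have "\<forall>x\<in>sphere y r1. m + \<delta> \<le> u x"
      proof
        fix x assume x: "x \<in> sphere y r1"
        then have "x \<in> U" and "dist x y < d"
          using ball radii d(1) unfolding r1_def by (auto simp: dist_commute)
        then have "u y - \<delta> < u x" using d(2) by blast
        then show "m + \<delta> \<le> u x" unfolding \<delta>_def by (simp add: field_simps)
      qed
      then have "m < u z"
        using supersol_above_min_in_annulus[OF lsc super above radii ball \<delta>] radii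
        unfolding r2_def by simp
      then show False using uz by simp
    qed
  qed
  then show "\<exists>e>0. ball z e \<subseteq> {x\<in>U. u x = m}" using \<rho>(1) by (intro exI[of _ "\<rho> / 2"]) auto
qed

text \<open>The strong minimum principle: M = {u1 = m} and {u1 > m} are disjoint open sets
  covering the connected set U, and M contains the point where the minimum is attained.\<close>
theorem mainTheorem2:
  fixes U :: "(real^'n) set" and u1 u2 :: "real^'n \<Rightarrow> real"
  assumes "bounded U" and "open U" and "connected U"
    and "visc_supersol U u1 u2"
    and "i0 \<in> {1::nat, 2}" and "xs \<in> U"
    and "\<forall>x\<in>U. (if i0 = 1 then u1 else u2) xs \<le> u1 x \<and> (if i0 = 1 then u1 else u2) xs \<le> u2 x"
  shows "\<exists>C. \<forall>x\<in>U. u1 x = C \<and> u2 x = C"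
proof -
  define m where "m = (if i0 = 1 then u1 else u2) xs"
  have lsc1: "lsc_on U u1" and super12: "super_cond U u1 u2" and super21: "super_cond U u2 u1"
    using assms(4) unfolding visc_supersol_def by auto
  have above: "\<forall>x\<in>U. m \<le> u1 x \<and> m \<le> u2 x" using assms(7) unfolding m_def .
  have coupled: "u1 x = m \<longleftrightarrow> u2 x = m" if "x \<in> U" for x
  proof
    assume "u1 x = m"
    then have "u2 x \<le> m" using supersol_min_coupling[OF super12 that] above by blast
    then show "u2 x = m" using above that by force
  next
    assume "u2 x = m"
    then have "u1 x \<le> m" using supersol_min_coupling[OF super21 that] above by blast
    then show "u1 x = m" using above that by force
  qed
  have "u1 xs = m" using coupled[OF assms(6)] unfolding m_def by auto
  define M where "M = {x\<in>U. u1 x = m}"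
  have "open M" unfolding M_def using supersol_min_set_open[OF assms(2) lsc1 super12 above] .
  moreover have "open {x\<in>U. m < u1 x}" using lsc_strict_superlevel_open[OF assms(2) lsc1] .
  moreover have "U \<subseteq> M \<union> {x\<in>U. m < u1 x}" and "M \<inter> {x\<in>U. m < u1 x} \<inter> U = {}"
    using above unfolding M_def by force+
  ultimately have "M \<inter> U = {} \<or> {x\<in>U. m < u1 x} \<inter> U = {}"
    using connectedD[OF assms(3)] by blast
  moreover have "xs \<in> M \<inter> U" unfolding M_def using \<open>u1 xs = m\<close> assms(6) by simp
  ultimately have "\<forall>x\<in>U. u1 x = m" using above by fastforce
  then show ?thesis using coupled by blast
qed

end
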